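(* Let $m=m(n)$ be a sequence of positive integers and $p=p(n)$ satisfy $p=o\!\left(\frac{1}{n\sqrt[3]{m}}\right)$. Put $$\hat p=1-\exp\!\left(-mp^{2}(1-p)^{n-2}\right).$$ Let $a\in[0,1]$ and let $\mathcal A$ be any graph property (an isomorphism-closed family of graphs on the $n$-element vertex set). Then $\Pr\{G(n,\hat p)\in\mathcal A\}\to a$ if and only if $\Pr\{\mathcal G(n,m,p)\in\mathcal A\}\to a$ (limits as $n\to\infty$).
   Context: $G(n,p)$ denotes the binomial random graph on an $n$-element vertex set in which each edge appears independently with probability $p$. The random intersection graph $\mathcal G(n,m,p)$ is defined as follows: there is a vertex set $\mathcal V$ with $|\mathcal V|=n$ and an auxiliary set of objects $\mathcal W$ with $|\mathcal W|=m$; each vertex $v$ is assigned a random set $W(v)\subseteq\mathcal W$, where the events $w\in W(v)$ occur independently with probability $p$ for all pairs $(v,w)\in\mathcal V\times\mathcal W$; two distinct vertices $v_1,v_2$ are adjacent iff $W(v_1)\cap W(v_2)\neq\emptyset$. *)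

theory Defs
  imports Complex_Main "HOL-Library.Landau_Symbols" "HOL-Library.FuncSet"
begin

text \<open>Graphs on the vertex set {0..<n}: a graph is a set of 2-element subsets of {..<n}.\<close>

definition all_edges :: "nat \<Rightarrow> nat set set" where
  "all_edges n = {e. e \<subseteq> {..<n} \<and> card e = 2}"

definition graph_property :: "(nat \<Rightarrow> nat set set set) \<Rightarrow> bool" where
  "graph_property A \<longleftrightarrow>
     (\<forall>n. A n \<subseteq> Pow (all_edges n)) \<and>
     (\<forall>n \<sigma> E. bij_betw \<sigma> {..<n} {..<n} \<and> E \<subseteq> all_edges n \<longrightarrow>
        (E \<in> A n \<longleftrightarrow> (\<lambda>e. \<sigma> ` e) ` E \<in> A n))"

definition prob_Gnp :: "nat \<Rightarrow> real \<Rightarrow> nat set set set \<Rightarrow> real" where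
  "prob_Gnp n q F =
     (\<Sum>E\<in>Pow (all_edges n) \<inter> F. q ^ card E * (1 - q) ^ (card (all_edges n) - card E))"

definition intersection_graph :: "nat \<Rightarrow> (nat \<Rightarrow> nat set) \<Rightarrow> nat set set" where
  "intersection_graph n W =
     {{u, v} | u v. u < n \<and> v < n \<and> u \<noteq> v \<and> W u \<inter> W v \<noteq> {}}"

definition prob_RIG :: "nat \<Rightarrow> nat \<Rightarrow> real \<Rightarrow> nat set set set \<Rightarrow> real" where
  "prob_RIG n m p F =
     (\<Sum>W\<in>PiE {..<n} (\<lambda>_. Pow {..<m}).
        (\<Prod>v<n. p ^ card (W v) * (1 - p) ^ (m - card (W v))) *
        (if intersection_graph n W \<in> F then 1 else 0))"

end

theory Submission
  imports Defs "HOL-Probability.Probability"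
begin

(*
  Both models are unions of m independent copies of a random graph on {..<n}:
  G(n,m,p) is the union, over the m objects w, of the clique on the random vertex set
  {v. w \<in> W v}, a p-random subset of the vertices ("one-object graph"); and G(n,p_hat),
  with 1 - p_hat = (1-q)^m, is the union of m independent copies of G(n,q), where
  q = 1 - exp(-r) and r = p^2 (1-p)^(n-2) is the probability that one object spans a given edge.

  A hybrid argument shows that for [0,1]-valued test functions the distance between the
  expectations under two m-fold unions is at most m times the distance for one copy.  For
  one copy the distance is bounded by the positive part of the difference of the two mass
  functions: the empty graph contributes nothing, single edges contribute at most
  N^2 r^2 \<le> n^4 p^4 (N the number of vertex pairs), and a one-object graph with two or more
  edges needs three chosen vertices, which has probability at most n^3 p^3.  Hence
    |P(G(n,p_hat) \<in> A) - P(G(n,m,p) \<in> A)| \<le> m (n^3 p^3 + n^4 p^4),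
  which tends to 0 when p = o(1/(n m^(1/3))), for any family A whatsoever.
*)

section \<open>Expectations of bounded functions on discrete distributions\<close>

lemma expectation_bind_pmf:
  fixes f :: "'b \<Rightarrow> real"
  assumes "\<And>x. \<bar>f x\<bar> \<le> B"
  shows "measure_pmf.expectation (bind_pmf M N) f =
         measure_pmf.expectation M (\<lambda>x. measure_pmf.expectation (N x) f)"
  unfolding measure_pmf_bind
  by (rule integral_bind[where K="count_space UNIV" and B=B and B'=1])
     (use assms in \<open>auto simp: measure_pmf_in_subprob_space\<close>)

lemma integrable_pmf_bounded:
  fixes f :: "'b \<Rightarrow> real"
  assumes "\<And>x. \<bar>f x\<bar> \<le> B"
  shows "integrable (measure_pmf M) f"
  using assms by (intro measure_pmf.integrable_const_bound[where B=B]) auto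

lemma expectation_abs_le:
  fixes f :: "'b \<Rightarrow> real"
  assumes "\<And>x. \<bar>f x\<bar> \<le> c"
  shows "\<bar>measure_pmf.expectation M f\<bar> \<le> c"
proof -
  have "\<bar>measure_pmf.expectation M f\<bar> \<le> measure_pmf.expectation M (\<lambda>x. \<bar>f x\<bar>)"
    using integral_norm_bound[of M f] by simp
  also have "\<dots> \<le> measure_pmf.expectation M (\<lambda>x. c)"
    using assms by (intro integral_mono integrable_pmf_bounded[where B=c])
      (auto intro: order_trans[OF abs_ge_zero])
  finally show ?thesis by simp
qed

lemma expectation_unit_interval:
  fixes f :: "'b \<Rightarrow> real"
  assumes "\<And>x. 0 \<le> f x \<and> f x \<le> 1"
  shows "0 \<le> measure_pmf.expectation M f \<and> measure_pmf.expectation M f \<le> 1"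
proof -
  have "0 \<le> measure_pmf.expectation M f" using assms by (intro integral_nonneg_AE) auto
  moreover have "\<bar>measure_pmf.expectation M f\<bar> \<le> 1" using assms by (intro expectation_abs_le) auto
  ultimately show ?thesis by simp
qed

lemma expectation_diff_le_excess:
  fixes h :: "'a \<Rightarrow> real"
  assumes U: "finite U" "set_pmf D1 \<subseteq> U" "set_pmf D2 \<subseteq> U"
    and h: "\<And>x. 0 \<le> h x \<and> h x \<le> 1"
  shows "\<bar>measure_pmf.expectation D1 h - measure_pmf.expectation D2 h\<bar> \<le>
         (\<Sum>x\<in>U. max 0 (pmf D1 x - pmf D2 x))"
proof -
  have weight_le: "c * (pmf D1 x - pmf D2 x) \<le> max 0 (pmf D1 x - pmf D2 x)"
    if "0 \<le> c" "c \<le> 1" for c x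
    using that by (cases "pmf D1 x - pmf D2 x \<ge> 0")
      (auto simp: mult_left_le_one_le mult_nonneg_nonpos max_def)
  have e1: "measure_pmf.expectation D1 g = (\<Sum>x\<in>U. g x * pmf D1 x)" for g :: "'a \<Rightarrow> real"
    using U by (intro integral_measure_pmf_real) auto
  have e2: "measure_pmf.expectation D2 g = (\<Sum>x\<in>U. g x * pmf D2 x)" for g :: "'a \<Rightarrow> real"
    using U by (intro integral_measure_pmf_real) auto
  have total: "(\<Sum>x\<in>U. pmf D1 x) = (\<Sum>x\<in>U. pmf D2 x)"
    using e1[of "\<lambda>_. 1"] e2[of "\<lambda>_. 1"] by simp
  have "(\<Sum>x\<in>U. h x * pmf D1 x) - (\<Sum>x\<in>U. h x * pmf D2 x) = (\<Sum>x\<in>U. h x * (pmf D1 x - pmf D2 x))"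
    by (simp add: sum_subtractf algebra_simps)
  also have "\<dots> \<le> (\<Sum>x\<in>U. max 0 (pmf D1 x - pmf D2 x))"
    using h by (intro sum_mono weight_le) auto
  finally have upper: "(\<Sum>x\<in>U. h x * pmf D1 x) - (\<Sum>x\<in>U. h x * pmf D2 x)
      \<le> (\<Sum>x\<in>U. max 0 (pmf D1 x - pmf D2 x))" .
  have "(\<Sum>x\<in>U. (1 - h x) * (pmf D1 x - pmf D2 x)) =
      ((\<Sum>x\<in>U. pmf D1 x) - (\<Sum>x\<in>U. pmf D2 x)) - (\<Sum>x\<in>U. h x * (pmf D1 x - pmf D2 x))"
    by (simp add: sum_subtractf left_diff_distrib)
  then have "(\<Sum>x\<in>U. h x * pmf D2 x) - (\<Sum>x\<in>U. h x * pmf D1 x) =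
      (\<Sum>x\<in>U. (1 - h x) * (pmf D1 x - pmf D2 x))"
    using total by (simp add: sum_subtractf right_diff_distrib)
  also have "\<dots> \<le> (\<Sum>x\<in>U. max 0 (pmf D1 x - pmf D2 x))"
    using h by (intro sum_mono weight_le) auto
  finally have lower: "(\<Sum>x\<in>U. h x * pmf D2 x) - (\<Sum>x\<in>U. h x * pmf D1 x)
      \<le> (\<Sum>x\<in>U. max 0 (pmf D1 x - pmf D2 x))" .
  show ?thesis unfolding e1 e2 using upper lower by linarith
qed

section \<open>Random subsets\<close>

definition random_subset :: "'a set \<Rightarrow> real \<Rightarrow> 'a set pmf" where
  "random_subset A q = map_pmf (\<lambda>f. {x\<in>A. f x}) (Pi_pmf A False (\<lambda>_. bernoulli_pmf q))"

lemma set_random_subset: "set_pmf (random_subset A q) \<subseteq> Pow A"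
  by (auto simp: random_subset_def)

lemma prod_if_card:
  assumes "finite A" "S \<subseteq> A"
  shows "(\<Prod>x\<in>A. if x \<in> S then a else b) = a ^ card S * b ^ (card A - card S)"
proof -
  have "(\<Prod>x\<in>A. if x \<in> S then a else b) = (\<Prod>x\<in>S. a) * (\<Prod>x\<in>A - S. b)"
    using assms by (subst prod.If_cases) (auto simp: Int_absorb1 Diff_eq)
  then show ?thesis
    using assms by (simp add: card_Diff_subset finite_subset)
qed

lemma pmf_random_subset:
  assumes "finite A" "S \<subseteq> A" "0 \<le> q" "q \<le> 1"
  shows "pmf (random_subset A q) S = q ^ card S * (1 - q) ^ (card A - card S)"
proof -
  let ?P = "Pi_pmf A False (\<lambda>_. bernoulli_pmf q)"
  let ?indicator = "\<lambda>x. x \<in> S"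
  have "pmf (random_subset A q) S = measure_pmf.prob ?P ((\<lambda>f. {x\<in>A. f x}) -` {S})"
    unfolding random_subset_def by (simp add: pmf_map)
  also have "\<dots> = measure_pmf.prob ?P {?indicator}"
  proof (rule measure_prob_cong_0)
    fix f assume "f \<in> (\<lambda>f. {x\<in>A. f x}) -` {S} - {?indicator}"
    then have "\<exists>x. x \<notin> A \<and> f x \<noteq> False"
      using assms(2) by (auto simp: fun_eq_iff)
    then show "pmf ?P f = 0" using assms by (intro pmf_Pi_outside) auto
  qed (use assms(2) in auto)
  also have "\<dots> = (\<Prod>x\<in>A. if x \<in> S then q else 1 - q)"
    using assms by (simp add: measure_pmf_single, subst pmf_Pi') (auto intro!: prod.cong)
  also have "\<dots> = q ^ card S * (1 - q) ^ (card A - card S)"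
    by (rule prod_if_card[OF assms(1,2)])
  finally show ?thesis .
qed

lemma prob_random_subset_contains:
  assumes "finite V" "T \<subseteq> V" "0 \<le> q" "q \<le> 1"
  shows "measure_pmf.prob (random_subset V q) {S. T \<subseteq> S} = q ^ card T"
proof -
  define B where "B x = (if x \<in> T then {True} else UNIV)" for x
  have "measure_pmf.prob (random_subset V q) {S. T \<subseteq> S} =
      measure_pmf.prob (Pi_pmf V False (\<lambda>_. bernoulli_pmf q)) (Pi V B)"
    unfolding random_subset_def measure_map_pmf
    by (rule arg_cong[where f="measure_pmf.prob _"]) (use assms(2) in \<open>auto simp: B_def Pi_def\<close>)
  also have "\<dots> = (\<Prod>x\<in>V. measure_pmf.prob (bernoulli_pmf q) (B x))"
    by (rule measure_Pi_pmf_Pi[OF assms(1)])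
  also have "\<dots> = (\<Prod>x\<in>V. if x \<in> T then q else 1)"
    using assms by (intro prod.cong refl) (auto simp: B_def measure_pmf_single)
  also have "\<dots> = q ^ card T" using prod_if_card[OF assms(1,2), of q 1] by simp
  finally show ?thesis .
qed

lemma choose_le_power: "n choose k \<le> n ^ k"
  by (cases "k \<le> n") (auto simp: binomial_le_pow binomial_eq_0)

text \<open>Union bound: the random subset has at least k elements with probability at most
  (|V| q)^k.\<close>

lemma prob_random_subset_card_ge:
  assumes V: "finite V" and q: "0 \<le> q" "q \<le> 1"
  shows "measure_pmf.prob (random_subset V q) {S. k \<le> card S} \<le> real (card V) ^ k * q ^ k"
proof -
  define K where "K = {T. T \<subseteq> V \<and> card T = k}"
  have finK: "finite K" unfolding K_def by (rule finite_subset[of _ "Pow V"]) (use V in auto)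
  have "measure_pmf.prob (random_subset V q) {S. k \<le> card S} =
      measure_pmf.prob (random_subset V q) ({S. k \<le> card S} \<inter> set_pmf (random_subset V q))"
    by (simp add: measure_Int_set_pmf)
  also have "\<dots> \<le> measure_pmf.prob (random_subset V q) (\<Union>T\<in>K. {S. T \<subseteq> S})"
  proof (rule measure_pmf.finite_measure_mono)
    show "{S. k \<le> card S} \<inter> set_pmf (random_subset V q) \<subseteq> (\<Union>T\<in>K. {S. T \<subseteq> S})"
    proof
      fix S assume S: "S \<in> {S. k \<le> card S} \<inter> set_pmf (random_subset V q)"
      then have "S \<subseteq> V" using set_random_subset by blast
      obtain T where "T \<subseteq> S" "card T = k" using S obtain_subset_with_card_n[of k S] by auto
      then show "S \<in> (\<Union>T\<in>K. {S. T \<subseteq> S})" using \<open>S \<subseteq> V\<close> unfolding K_def by blast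
    qed
  qed simp
  also have "\<dots> \<le> (\<Sum>T\<in>K. measure_pmf.prob (random_subset V q) {S. T \<subseteq> S})"
    by (rule measure_pmf.finite_measure_subadditive_finite[OF finK]) auto
  also have "\<dots> = real (card V choose k) * q ^ k"
    using V q n_subsets[OF V, of k] by (simp add: K_def prob_random_subset_contains)
  also have "\<dots> \<le> real (card V) ^ k * q ^ k"
    using q choose_le_power[of "card V" k]
    by (intro mult_right_mono) (simp_all flip: of_nat_power)
  finally show ?thesis .
qed


section \<open>Unions of independent copies\<close>

definition iid_union :: "nat \<Rightarrow> 'a set pmf \<Rightarrow> 'a set pmf" where
  "iid_union k D = map_pmf (\<lambda>T. \<Union>w<k. T w) (Pi_pmf {..<k} {} (\<lambda>_. D))"

lemma iid_union_0: "iid_union 0 D = return_pmf {}"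
  by (simp add: iid_union_def)

lemma iid_union_Suc: "iid_union (Suc k) D = bind_pmf D (\<lambda>y. map_pmf (\<lambda>G. G \<union> y) (iid_union k D))"
proof -
  have union_upd: "(\<Union>w<Suc k. (f(k:=y)) w) = (\<Union>w<k. f w) \<union> y" for f :: "nat \<Rightarrow> 'a set" and y
    by (auto simp: less_Suc_eq)
  have "iid_union (Suc k) D = map_pmf (\<lambda>T. \<Union>w<Suc k. T w)
      (do {y \<leftarrow> D; f \<leftarrow> Pi_pmf {..<k} {} (\<lambda>_. D); return_pmf (f(k := y))})"
    unfolding iid_union_def lessThan_Suc by (subst Pi_pmf_insert') auto
  also have "\<dots> = bind_pmf D (\<lambda>y. bind_pmf (Pi_pmf {..<k} {} (\<lambda>_. D))
      (\<lambda>f. return_pmf ((\<Union>w<k. f w) \<union> y)))"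
    by (simp only: map_bind_pmf map_return_pmf union_upd)
  also have "\<dots> = bind_pmf D (\<lambda>y. map_pmf (\<lambda>G. G \<union> y) (iid_union k D))"
    unfolding iid_union_def by (simp add: map_pmf_def bind_assoc_pmf bind_return_pmf)
  finally show ?thesis .
qed

text \<open>Hybrid argument: if no [0,1]-valued test distinguishes D1 from D2 by more than \<delta>,
  then none distinguishes their k-fold unions by more than k\<delta>.  The new copy is replaced
  first, and then the induction hypothesis is applied under the fixed new copy.\<close>

lemma iid_union_distance:
  fixes D1 D2 :: "'a set pmf" and g :: "'a set \<Rightarrow> real"
  assumes one_copy: "\<And>h. (\<And>x. 0 \<le> h x \<and> h x \<le> 1) \<Longrightarrow>
      \<bar>measure_pmf.expectation D1 h - measure_pmf.expectation D2 h\<bar> \<le> \<delta>"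
    and g: "\<And>x. 0 \<le> g x \<and> g x \<le> 1"
  shows "\<bar>measure_pmf.expectation (iid_union k D1) g -
          measure_pmf.expectation (iid_union k D2) g\<bar> \<le> real k * \<delta>"
  using g
proof (induction k arbitrary: g)
  case 0
  then show ?case by (simp add: iid_union_0)
next
  case (Suc k)
  define \<phi>1 where "\<phi>1 y = measure_pmf.expectation (iid_union k D1) (\<lambda>G. g (G \<union> y))" for y
  define \<phi>2 where "\<phi>2 y = measure_pmf.expectation (iid_union k D2) (\<lambda>G. g (G \<union> y))" for y
  have g_abs: "\<bar>g x\<bar> \<le> 1" for x using Suc.prems[of x] by auto
  have \<phi>1_unit: "0 \<le> \<phi>1 y \<and> \<phi>1 y \<le> 1" for y
    unfolding \<phi>1_def by (rule expectation_unit_interval) (use Suc.prems in auto)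
  have \<phi>2_unit: "0 \<le> \<phi>2 y \<and> \<phi>2 y \<le> 1" for y
    unfolding \<phi>2_def by (rule expectation_unit_interval) (use Suc.prems in auto)
  have new_copy: "\<bar>measure_pmf.expectation D1 \<phi>1 - measure_pmf.expectation D2 \<phi>1\<bar> \<le> \<delta>"
    by (rule one_copy) (use \<phi>1_unit in auto)
  have "measure_pmf.expectation D2 \<phi>1 - measure_pmf.expectation D2 \<phi>2 =
        measure_pmf.expectation D2 (\<lambda>y. \<phi>1 y - \<phi>2 y)"
    using \<phi>1_unit \<phi>2_unit by (simp add: integrable_pmf_bounded[where B=1])
  also have "\<bar>\<dots>\<bar> \<le> real k * \<delta>"
    unfolding \<phi>1_def \<phi>2_def by (intro expectation_abs_le Suc.IH) (use Suc.prems in auto)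
  finally have old_copies:
    "\<bar>measure_pmf.expectation D2 \<phi>1 - measure_pmf.expectation D2 \<phi>2\<bar> \<le> real k * \<delta>" .
  have "measure_pmf.expectation (iid_union (Suc k) D1) g = measure_pmf.expectation D1 \<phi>1"
       "measure_pmf.expectation (iid_union (Suc k) D2) g = measure_pmf.expectation D2 \<phi>2"
    unfolding \<phi>1_def \<phi>2_def iid_union_Suc by (simp_all add: expectation_bind_pmf[OF g_abs])
  then show ?case using new_copy old_copies by (simp add: algebra_simps abs_le_iff)
qed

lemma bernoulli_pmf_or:
  assumes "0 \<le> a" "a \<le> 1" "0 \<le> b" "b \<le> 1"
  shows "bind_pmf (bernoulli_pmf a) (\<lambda>u. map_pmf (\<lambda>v. u \<or> v) (bernoulli_pmf b)) =
         bernoulli_pmf (1 - (1-a)*(1-b))"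
proof (rule pmf_eqI)
  fix x :: bool
  have or_const: "map_pmf (\<lambda>v. True \<or> v) (bernoulli_pmf b) = return_pmf True"
       "map_pmf (\<lambda>v. False \<or> v) (bernoulli_pmf b) = bernoulli_pmf b"
    by simp_all
  have "0 \<le> 1 - (1-a)*(1-b)" "1 - (1-a)*(1-b) \<le> 1"
    using assms by (auto intro: mult_le_one)
  then show "pmf (bind_pmf (bernoulli_pmf a) (\<lambda>u. map_pmf (\<lambda>v. u \<or> v) (bernoulli_pmf b))) x =
             pmf (bernoulli_pmf (1 - (1-a)*(1-b))) x"
    using assms by (cases x) (simp_all add: pmf_bind or_const algebra_simps)
qed

lemma random_subset_union:
  assumes E: "finite E" and ab: "0 \<le> a" "a \<le> 1" "0 \<le> b" "b \<le> 1"
  shows "bind_pmf (random_subset E a) (\<lambda>y. map_pmf (\<lambda>G. G \<union> y) (random_subset E b)) =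
         random_subset E (1 - (1-a)*(1-b))"
proof -
  define Pa where "Pa = Pi_pmf E False (\<lambda>_. bernoulli_pmf a)"
  define Pb where "Pb = Pi_pmf E False (\<lambda>_. bernoulli_pmf b)"
  have or_with: "Pi_pmf E False (\<lambda>x. map_pmf (\<lambda>v. f x \<or> v) (bernoulli_pmf b)) =
      bind_pmf Pb (\<lambda>g. return_pmf (\<lambda>x. if x \<in> E then f x \<or> g x else False))" for f
  proof -
    have "Pi_pmf E False (\<lambda>x. map_pmf (\<lambda>v. f x \<or> v) (bernoulli_pmf b)) =
        Pi_pmf E False (\<lambda>x. bind_pmf (bernoulli_pmf b) (\<lambda>v. return_pmf (f x \<or> v)))"
      by (simp add: map_pmf_def)
    also have "\<dots> = bind_pmf Pb (\<lambda>g. Pi_pmf E False (\<lambda>x. return_pmf (f x \<or> g x)))"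
      unfolding Pb_def by (rule Pi_pmf_bind[OF E])
    finally show ?thesis using E by simp
  qed
  have "random_subset E (1 - (1-a)*(1-b)) = map_pmf (\<lambda>f. {x\<in>E. f x})
      (Pi_pmf E False (\<lambda>x. bind_pmf (bernoulli_pmf a) (\<lambda>u. map_pmf (\<lambda>v. u \<or> v) (bernoulli_pmf b))))"
    unfolding random_subset_def using bernoulli_pmf_or[OF ab] by simp
  also have "\<dots> = map_pmf (\<lambda>f. {x\<in>E. f x})
      (bind_pmf Pa (\<lambda>f. Pi_pmf E False (\<lambda>x. map_pmf (\<lambda>v. f x \<or> v) (bernoulli_pmf b))))"
    unfolding Pa_def by (subst Pi_pmf_bind[OF E, where d'=False]) simp
  also have "\<dots> = bind_pmf Pa (\<lambda>f. bind_pmf Pb (\<lambda>g. return_pmf {x\<in>E. f x \<or> g x}))"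
    unfolding or_with
    by (simp add: map_bind_pmf, intro bind_pmf_cong refl arg_cong[where f=return_pmf], blast)
  also have "\<dots> = bind_pmf (random_subset E a) (\<lambda>y. map_pmf (\<lambda>G. G \<union> y) (random_subset E b))"
    unfolding random_subset_def Pa_def Pb_def
    by (simp add: bind_map_pmf map_pmf_def bind_assoc_pmf bind_return_pmf Un_commute
        Collect_disj_eq[symmetric] conj_disj_distribL)
  finally show ?thesis by simp
qed

lemma iid_union_random_subset:
  assumes E: "finite E" and q: "0 \<le> q" "q \<le> 1"
  shows "iid_union k (random_subset E q) = random_subset E (1 - (1-q)^k)"
proof (induction k)
  case 0
  have "bernoulli_pmf 0 = return_pmf False"
  proof (rule pmf_eqI)
    show "pmf (bernoulli_pmf 0) x = pmf (return_pmf False) x" for x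
      by (cases x) simp_all
  qed
  then have "random_subset E 0 = return_pmf {}"
    unfolding random_subset_def using E by simp
  then show ?case by (simp add: iid_union_0)
next
  case (Suc k)
  have "0 \<le> 1 - (1-q)^k" "1 - (1-q)^k \<le> 1" using q by (auto simp: power_le_one)
  then show ?case unfolding iid_union_Suc Suc.IH
    by (subst random_subset_union[OF E q]) (simp_all add: algebra_simps)
qed


section \<open>Both models as unions of independent copies\<close>

definition clique :: "nat set \<Rightarrow> nat set set" where
  "clique S = {{u, v} | u v. u \<in> S \<and> v \<in> S \<and> u \<noteq> v}"

lemma clique_empty [simp]: "clique {} = {}"
  by (auto simp: clique_def)

text \<open>The graph contributed by a single object of G(n,m,p): the clique on the p-random set of
  vertices that choose the object.\<close>

definition object_graph :: "nat \<Rightarrow> real \<Rightarrow> nat set set pmf" where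
  "object_graph n p = map_pmf clique (random_subset {..<n} p)"

lemma finite_all_edges: "finite (all_edges n)"
  unfolding all_edges_def by (rule finite_subset[of _ "Pow {..<n}"]) auto

lemma card_all_edges: "card (all_edges n) = n choose 2"
proof -
  have "all_edges n = {B. B \<subseteq> {..<n} \<and> card B = 2}" unfolding all_edges_def by auto
  then show ?thesis using n_subsets[of "{..<n}" 2] by simp
qed

lemma clique_subset_all_edges: "S \<subseteq> {..<n} \<Longrightarrow> clique S \<subseteq> all_edges n"
  unfolding clique_def all_edges_def by auto

lemma set_object_graph: "set_pmf (object_graph n p) \<subseteq> Pow (all_edges n)"
  using set_random_subset[of "{..<n}" p] clique_subset_all_edges[of _ n]
  by (auto simp: object_graph_def)

lemma prob_Gnp_expectation:
  assumes "0 \<le> q" "q \<le> 1"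
  shows "prob_Gnp n q F =
         measure_pmf.expectation (random_subset (all_edges n) q) (\<lambda>X. if X \<in> F then 1 else 0)"
proof -
  let ?w = "\<lambda>S. q ^ card S * (1 - q) ^ (card (all_edges n) - card S)"
  have "measure_pmf.expectation (random_subset (all_edges n) q) (\<lambda>X. if X \<in> F then 1 else 0) =
      (\<Sum>S\<in>Pow (all_edges n). (if S \<in> F then 1 else 0) * pmf (random_subset (all_edges n) q) S)"
    using set_random_subset by (intro integral_measure_pmf_real) (auto simp: finite_all_edges)
  also have "\<dots> = (\<Sum>S\<in>Pow (all_edges n). if S \<in> F then ?w S else 0)"
    using assms by (intro sum.cong) (auto simp: pmf_random_subset finite_all_edges)
  also have "\<dots> = sum ?w (Pow (all_edges n) \<inter> F)"
    by (simp add: sum.If_cases finite_all_edges Int_def)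
  finally show ?thesis unfolding prob_Gnp_def by simp
qed

lemma intersection_graph_as_union:
  assumes "W \<in> PiE {..<n} (\<lambda>_. Pow {..<m})"
  shows "intersection_graph n W = (\<Union>w<m. clique {v. v < n \<and> w \<in> W v})"
proof
  show "intersection_graph n W \<subseteq> (\<Union>w<m. clique {v. v < n \<and> w \<in> W v})"
  proof
    fix e assume "e \<in> intersection_graph n W"
    then obtain u v where e: "e = {u,v}" "u < n" "v < n" "u \<noteq> v" "W u \<inter> W v \<noteq> {}"
      unfolding intersection_graph_def by blast
    then obtain w where w: "w \<in> W u" "w \<in> W v" by blast
    then have "w < m" using assms e by (auto simp: PiE_def Pi_def)
    then show "e \<in> (\<Union>w<m. clique {v. v < n \<and> w \<in> W v})"
      using e w unfolding clique_def by blast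
  qed
qed (auto simp: clique_def intersection_graph_def)

lemma expectation_object_vertex_sets:
  fixes g :: "(nat \<Rightarrow> nat set) \<Rightarrow> real"
  assumes p: "0 \<le> p" "p \<le> 1"
  shows "measure_pmf.expectation (Pi_pmf {..<m} {} (\<lambda>_. random_subset {..<n} p)) g =
    (\<Sum>T\<in>PiE_dflt {..<m} {} (\<lambda>_. Pow {..<n}). g T * (\<Prod>w<m. \<Prod>v<n. if v \<in> T w then p else 1 - p))"
proof -
  let ?P = "Pi_pmf {..<m} {} (\<lambda>_. random_subset {..<n} p)"
  let ?U = "PiE_dflt {..<m} {} (\<lambda>_. Pow {..<n})"
  have "set_pmf ?P \<subseteq> ?U"
    using set_Pi_pmf_subset'[of "{..<m}" "{}" "\<lambda>_. random_subset {..<n} p"]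
      set_random_subset[of "{..<n}" p]
    by (auto simp: PiE_dflt_def)
  then have "measure_pmf.expectation ?P g = (\<Sum>T\<in>?U. g T * pmf ?P T)"
    by (intro integral_measure_pmf_real) (auto intro: finite_PiE_dflt)
  also have "\<dots> = (\<Sum>T\<in>?U. g T * (\<Prod>w<m. \<Prod>v<n. if v \<in> T w then p else 1 - p))"
  proof (intro sum.cong refl arg_cong2[where f="(*)"])
    fix T assume T: "T \<in> ?U"
    then have "pmf ?P T = (\<Prod>w<m. pmf (random_subset {..<n} p) (T w))"
      by (intro pmf_Pi') (auto simp: PiE_dflt_def)
    also have "\<dots> = (\<Prod>w<m. \<Prod>v<n. if v \<in> T w then p else 1 - p)"
      using T p by (intro prod.cong refl) (auto simp: PiE_dflt_def pmf_random_subset prod_if_card)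
    finally show "pmf ?P T = (\<Prod>w<m. \<Prod>v<n. if v \<in> T w then p else 1 - p)" .
  qed
  finally show ?thesis .
qed

text \<open>G(n,m,p) is the union of m independent one-object graphs: transpose the assignment
  vertex \<mapsto> objects into object \<mapsto> vertices.\<close>

lemma prob_RIG_expectation:
  assumes p: "0 \<le> p" "p \<le> 1"
  shows "prob_RIG n m p F =
         measure_pmf.expectation (iid_union m (object_graph n p)) (\<lambda>X. if X \<in> F then 1 else 0)"
proof -
  define ind where "ind X = (if X \<in> F then 1 else (0::real))" for X
  define to_vertex_sets where
    "to_vertex_sets W = (\<lambda>w. if w < m then {v. v < n \<and> w \<in> W v} else {})" for W :: "nat \<Rightarrow> nat set"
  define to_object_sets where
    "to_object_sets T = (\<lambda>v\<in>{..<n}. {w. w < m \<and> v \<in> T w})" for T :: "nat \<Rightarrow> nat set"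
  have "iid_union m (object_graph n p) =
      map_pmf (\<lambda>T. \<Union>w<m. clique (T w)) (Pi_pmf {..<m} {} (\<lambda>_. random_subset {..<n} p))"
    unfolding iid_union_def object_graph_def
    by (subst Pi_pmf_map[where dflt="{}"]) (auto simp: pmf.map_comp o_def)
  then have "measure_pmf.expectation (iid_union m (object_graph n p)) ind =
      (\<Sum>T\<in>PiE_dflt {..<m} {} (\<lambda>_. Pow {..<n}).
        ind (\<Union>w<m. clique (T w)) * (\<Prod>w<m. \<Prod>v<n. if v \<in> T w then p else 1 - p))"
    using expectation_object_vertex_sets[OF p] by simp
  also have "\<dots> = (\<Sum>W\<in>PiE {..<n} (\<lambda>_. Pow {..<m}).
        (\<Prod>v<n. p ^ card (W v) * (1 - p) ^ (m - card (W v))) * ind (intersection_graph n W))"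
  proof (rule sym, rule sum.reindex_bij_witness[of _ to_object_sets to_vertex_sets])
    fix W assume W: "W \<in> PiE {..<n} (\<lambda>_. Pow {..<m})"
    have "(\<Prod>w<m. \<Prod>v<n. if v \<in> to_vertex_sets W w then p else 1 - p) =
        (\<Prod>v<n. \<Prod>w<m. if w \<in> W v then p else 1 - p)"
      by (subst prod.swap) (auto simp: to_vertex_sets_def intro!: prod.cong)
    also have "\<dots> = (\<Prod>v<n. p ^ card (W v) * (1 - p) ^ (m - card (W v)))"
    proof (intro prod.cong refl)
      fix v assume "v \<in> {..<n}"
      then have "W v \<subseteq> {..<m}" using W by auto
      then show "(\<Prod>w<m. if w \<in> W v then p else 1 - p) = p ^ card (W v) * (1 - p) ^ (m - card (W v))"
        by (simp add: prod_if_card)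
    qed
    finally show "ind (\<Union>w<m. clique (to_vertex_sets W w)) *
        (\<Prod>w<m. \<Prod>v<n. if v \<in> to_vertex_sets W w then p else 1 - p) =
        (\<Prod>v<n. p ^ card (W v) * (1 - p) ^ (m - card (W v))) * ind (intersection_graph n W)"
      unfolding intersection_graph_as_union[OF W] by (simp add: to_vertex_sets_def)
    show "to_object_sets (to_vertex_sets W) = W"
      using W by (auto simp: to_vertex_sets_def to_object_sets_def PiE_def Pi_def extensional_def fun_eq_iff)
  qed (auto simp: to_vertex_sets_def to_object_sets_def PiE_dflt_def fun_eq_iff)
  also have "\<dots> = prob_RIG n m p F"
    unfolding prob_RIG_def ind_def by (intro sum.cong refl)
  finally show ?thesis unfolding ind_def by simp
qed


section \<open>Comparing one object with one copy of G(n,q)\<close>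

text \<open>The probability that a single object spans exactly a given edge.\<close>

definition edge_prob :: "nat \<Rightarrow> real \<Rightarrow> real" where
  "edge_prob n p = p^2 * (1-p)^(n-2)"

lemma clique_pair: "u \<noteq> v \<Longrightarrow> clique {u,v} = {{u,v}}"
  unfolding clique_def by (auto simp: insert_commute)

lemma clique_eq_edge:
  assumes "clique S = {{u,v}}" "u \<noteq> v"
  shows "S = {u,v}"
proof -
  have "{u,v} \<in> clique S" using assms by simp
  then have uv: "u \<in> S" "v \<in> S" unfolding clique_def by (auto simp: doubleton_eq_iff)
  have "w \<in> {u,v}" if "w \<in> S" for w
  proof (rule ccontr)
    assume "w \<notin> {u,v}"
    then have "{u,w} \<in> clique S" using uv that unfolding clique_def by blast
    then show False using assms \<open>w \<notin> {u,v}\<close> by (auto simp: doubleton_eq_iff)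
  qed
  with uv show ?thesis by auto
qed

lemma clique_two_edges_card:
  assumes "finite S" "clique S \<noteq> {}" "\<And>e. clique S \<noteq> {e}"
  shows "3 \<le> card S"
proof (rule ccontr)
  assume "\<not> 3 \<le> card S"
  then consider "card S < 2" | "card S = 2" by linarith
  then show False
  proof cases
    case 1
    then have "clique S = {}"
      using card_mono[OF assms(1), of "{u,v}" for u v] unfolding clique_def by fastforce
    then show False using assms(2) by simp
  next
    case 2
    then obtain u v where "S = {u,v}" "u \<noteq> v" by (auto simp: card_2_iff)
    then show False using assms(3)[of "{u,v}"] by (simp add: clique_pair)
  qed
qed

text \<open>A one-object graph is a given single edge exactly when the object is chosen by
  precisely the two endpoints.\<close>

lemma pmf_object_graph_edge:
  assumes p: "0 \<le> p" "p \<le> 1" and e: "e \<in> all_edges n"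
  shows "pmf (object_graph n p) {e} = edge_prob n p"
proof -
  obtain u v where uv: "e = {u,v}" "u \<noteq> v"
    using e unfolding all_edges_def by (auto simp: card_2_iff)
  have e_sub: "e \<subseteq> {..<n}" "card e = 2" using e unfolding all_edges_def by auto
  have "pmf (object_graph n p) {e} = measure_pmf.prob (random_subset {..<n} p) (clique -` {{e}})"
    by (simp add: object_graph_def pmf_map)
  also have "\<dots> = measure_pmf.prob (random_subset {..<n} p) {e}"
  proof (rule measure_prob_cong_0)
    fix S assume S: "S \<in> clique -` {{e}} - {e}"
    then have "S \<notin> set_pmf (random_subset {..<n} p)"
      using clique_eq_edge[of S u v] uv by auto
    then show "pmf (random_subset {..<n} p) S = 0" by (simp add: set_pmf_eq)
  qed (use clique_pair[OF uv(2)] uv in auto)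
  also have "\<dots> = edge_prob n p"
    using p e_sub by (simp add: measure_pmf_single pmf_random_subset edge_prob_def)
  finally show ?thesis .
qed

lemma exp_neg_le_quadratic:
  fixes r :: real assumes "0 \<le> r" shows "exp (-r) \<le> 1 - r + r^2"
proof -
  have "exp (-r) \<le> 1 / (1 + r)"
    using exp_ge_add_one_self[of r] assms by (simp add: exp_minus field_simps)
  also have "\<dots> \<le> 1 - r + r^2" using assms by (simp add: field_simps power2_eq_square)
  finally show ?thesis .
qed

text \<open>A single given edge is at most N r^2 more likely as a one-object graph (probability r)
  than as G(n, 1 - exp(-r)) on N vertex pairs.\<close>

lemma single_edge_excess:
  fixes r :: real assumes r: "0 \<le> r" "r \<le> 1" and N: "1 \<le> N"
  shows "r - (1 - exp (-r)) * exp (-r) ^ (N - 1) \<le> real N * r^2"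
proof -
  have "1 - real (N - 1) * r \<le> exp (- (real (N - 1) * r))"
    using exp_ge_add_one_self[of "- (real (N - 1) * r)"] by simp
  also have "\<dots> = exp (-r) ^ (N - 1)" by (simp add: exp_of_nat_mult[symmetric])
  finally have others_absent: "1 - real (N - 1) * r \<le> exp (-r) ^ (N - 1)" .
  have edge_present: "r - r^2 \<le> 1 - exp (-r)" using exp_neg_le_quadratic[OF r(1)] by simp
  have "0 \<le> r - r^2" using r by (simp add: power2_eq_square mult_left_le_one_le)
  then have "(r - r^2) * (1 - real (N - 1) * r) \<le> (r - r^2) * exp (-r) ^ (N - 1)"
    by (rule mult_left_mono[OF others_absent])
  also have "\<dots> \<le> (1 - exp (-r)) * exp (-r) ^ (N - 1)"
    using edge_present by (intro mult_right_mono) auto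
  finally have lower: "(r - r^2) * (1 - real (N - 1) * r) \<le> (1 - exp (-r)) * exp (-r) ^ (N - 1)" .
  have "(r - r^2) * (1 - real (N - 1) * r) = r - real N * r^2 + (real N - 1) * r^3"
    using N by (simp add: of_nat_diff algebra_simps power2_eq_square power3_eq_cube)
  moreover have "0 \<le> (real N - 1) * r^3" using N r by simp
  ultimately show ?thesis using lower by linarith
qed

text \<open>With q = 1 - exp(-r), the empty graph is no more likely as a one-object graph than as
  G(n,q): the former has probability at most 1 - N r, the latter exactly exp(-N r).\<close>

lemma object_graph_empty_le:
  assumes p: "0 \<le> p" "p \<le> 1"
  shows "pmf (object_graph n p) {} \<le>
         pmf (random_subset (all_edges n) (1 - exp (- edge_prob n p))) {}"
proof -
  let ?E = "all_edges n" and ?r = "edge_prob n p" and ?D = "object_graph n p"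
  have sing: "(\<Sum>x\<in>(\<lambda>e. {e}) ` ?E. pmf ?D x) = real (card ?E) * ?r"
    using p by (subst sum.reindex) (auto simp: inj_on_def pmf_object_graph_edge)
  have "measure_pmf.prob ?D (insert {} ((\<lambda>e. {e}) ` ?E)) =
      pmf ?D {} + (\<Sum>x\<in>(\<lambda>e. {e}) ` ?E. pmf ?D x)"
    by (subst measure_measure_pmf_finite) (auto simp: finite_all_edges intro!: sum.insert)
  then have "pmf ?D {} + real (card ?E) * ?r = measure_pmf.prob ?D (insert {} ((\<lambda>e. {e}) ` ?E))"
    using sing by simp
  also have "\<dots> \<le> 1" by simp
  finally have "pmf ?D {} \<le> 1 - real (card ?E) * ?r" by simp
  also have "\<dots> \<le> exp (- (real (card ?E) * ?r))"
    using exp_ge_add_one_self[of "- (real (card ?E) * ?r)"] by simp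
  also have "\<dots> = exp (- ?r) ^ card ?E"
    by (simp add: exp_of_nat_mult[symmetric])
  also have "\<dots> = pmf (random_subset ?E (1 - exp (- ?r))) {}"
    using p by (simp add: pmf_random_subset finite_all_edges edge_prob_def)
  finally show ?thesis .
qed

lemma object_graph_edge_excess:
  assumes p: "0 \<le> p" "p \<le> 1" and e: "e \<in> all_edges n"
  shows "pmf (object_graph n p) {e} - pmf (random_subset (all_edges n) (1 - exp (- edge_prob n p))) {e}
         \<le> real (n choose 2) * (edge_prob n p)^2"
proof -
  let ?N = "card (all_edges n)" and ?r = "edge_prob n p"
  have r: "0 \<le> ?r" "?r \<le> 1" using p by (auto simp: edge_prob_def mult_le_one power_le_one)
  have "1 \<le> ?N" using e finite_all_edges by (metis One_nat_def Suc_leI card_gt_0_iff empty_iff)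
  then have "?r - (1 - exp (- ?r)) * exp (- ?r) ^ (?N - 1) \<le> real ?N * ?r^2"
    by (rule single_edge_excess[OF r])
  then show ?thesis
    using p e r by (simp add: pmf_object_graph_edge pmf_random_subset finite_all_edges card_all_edges)
qed

text \<open>A one-object graph with two or more edges needs three chosen vertices.\<close>

lemma prob_object_graph_two_edges:
  assumes p: "0 \<le> p" "p \<le> 1"
  shows "measure_pmf.prob (object_graph n p) {G. G \<noteq> {} \<and> (\<forall>e. G \<noteq> {e})}
         \<le> real n ^ 3 * p ^ 3"
proof -
  let ?V = "random_subset {..<n} p"
  have "measure_pmf.prob (object_graph n p) {G. G \<noteq> {} \<and> (\<forall>e. G \<noteq> {e})} =
      measure_pmf.prob ?V (clique -` {G. G \<noteq> {} \<and> (\<forall>e. G \<noteq> {e})} \<inter> set_pmf ?V)"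
    by (simp add: object_graph_def measure_Int_set_pmf)
  also have "\<dots> \<le> measure_pmf.prob ?V {S. 3 \<le> card S}"
  proof (rule measure_pmf.finite_measure_mono)
    show "clique -` {G. G \<noteq> {} \<and> (\<forall>e. G \<noteq> {e})} \<inter> set_pmf ?V \<subseteq> {S. 3 \<le> card S}"
      using set_random_subset[of "{..<n}" p]
      by (auto intro!: clique_two_edges_card intro: finite_subset)
  qed simp
  also have "\<dots> \<le> real n ^ 3 * p ^ 3"
    using prob_random_subset_card_ge[of "{..<n}" p 3] p by simp
  finally show ?thesis .
qed

lemma sum_Pow_by_size:
  assumes E: "finite E"
  shows "(\<Sum>x\<in>Pow E. f x) =
         f {} + (\<Sum>e\<in>E. f {e}) + (\<Sum>x\<in>{G\<in>Pow E. G \<noteq> {} \<and> (\<forall>e. G \<noteq> {e})}. f x)"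
proof -
  define Sing where "Sing = (\<lambda>e. {e}) ` E"
  define Many where "Many = {G\<in>Pow E. G \<noteq> {} \<and> (\<forall>e. G \<noteq> {e})}"
  have fin: "finite Sing" "finite Many" using E by (auto simp: Sing_def Many_def)
  have "Pow E = insert {} (Sing \<union> Many)" unfolding Many_def Sing_def by auto
  then have "(\<Sum>x\<in>Pow E. f x) = f {} + (\<Sum>x\<in>Sing \<union> Many. f x)"
    using fin by (simp only:) (rule sum.insert, auto simp: Many_def Sing_def)
  also have "\<dots> = f {} + (\<Sum>x\<in>Sing. f x) + (\<Sum>x\<in>Many. f x)"
    using fin by (subst sum.union_disjoint) (auto simp: Many_def Sing_def add.assoc)
  also have "(\<Sum>x\<in>Sing. f x) = (\<Sum>e\<in>E. f {e})"
    unfolding Sing_def by (subst sum.reindex) (auto simp: inj_on_def)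
  finally show ?thesis unfolding Many_def .
qed

lemma expected_edge_count_le:
  assumes p: "0 \<le> p" "p \<le> 1"
  shows "real (n choose 2) * edge_prob n p \<le> (real n * p)^2"
proof -
  have "real (n choose 2) \<le> real n ^ 2"
    using choose_le_power[of n 2] by (metis of_nat_le_iff of_nat_power)
  moreover have "0 \<le> edge_prob n p" "edge_prob n p \<le> p^2"
    using p by (auto simp: edge_prob_def mult_left_le power_le_one)
  ultimately show ?thesis by (simp add: power_mult_distrib mult_mono)
qed

text \<open>Total excess of the one-object graph over G(n,q), q = 1 - exp(-edge_prob n p):
  single edges contribute at most N^2 r^2 \<le> n^4 p^4, larger graphs at most n^3 p^3.\<close>

lemma object_graph_total_excess:
  assumes p: "0 \<le> p" "p \<le> 1"
  shows "(\<Sum>x\<in>Pow (all_edges n). max 0 (pmf (object_graph n p) x -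
            pmf (random_subset (all_edges n) (1 - exp (- edge_prob n p))) x))
         \<le> real n ^ 3 * p ^ 3 + real n ^ 4 * p ^ 4"
proof -
  define E where "E = all_edges n"
  define N where "N = real (n choose 2)"
  define r where "r = edge_prob n p"
  define excess where "excess x = max 0 (pmf (object_graph n p) x -
      pmf (random_subset E (1 - exp (- r))) x)" for x
  define Many where "Many = {G\<in>Pow E. G \<noteq> {} \<and> (\<forall>e. G \<noteq> {e})}"
  have finE: "finite E" unfolding E_def by (rule finite_all_edges)
  have "excess {} = 0"
    using object_graph_empty_le[OF p, of n] by (simp add: excess_def E_def r_def)
  moreover have "(\<Sum>e\<in>E. excess {e}) \<le> (\<Sum>e\<in>E. N * r^2)"
    using object_graph_edge_excess[OF p] by (intro sum_mono) (simp add: excess_def E_def N_def r_def)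
  moreover have "(\<Sum>x\<in>Many. excess x) \<le> real n ^ 3 * p ^ 3"
  proof -
    have "(\<Sum>x\<in>Many. excess x) \<le> (\<Sum>x\<in>Many. pmf (object_graph n p) x)"
      unfolding excess_def by (intro sum_mono) auto
    also have "\<dots> = measure_pmf.prob (object_graph n p) Many"
      using finE by (simp add: Many_def measure_measure_pmf_finite)
    also have "\<dots> \<le> measure_pmf.prob (object_graph n p) {G. G \<noteq> {} \<and> (\<forall>e. G \<noteq> {e})}"
      by (rule measure_pmf.finite_measure_mono) (auto simp: Many_def)
    also have "\<dots> \<le> real n ^ 3 * p ^ 3" by (rule prob_object_graph_two_edges[OF p])
    finally show ?thesis .
  qed
  moreover have "(\<Sum>e\<in>E. N * r^2) \<le> real n ^ 4 * p ^ 4"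
  proof -
    have "0 \<le> N * r" using p by (simp add: N_def r_def edge_prob_def)
    then have "(N * r)^2 \<le> (real n * p)^4"
      using expected_edge_count_le[OF p, of n] power_mono[of "N * r" "(real n * p)^2" 2]
      by (simp add: N_def r_def flip: power_mult)
    then show ?thesis by (simp add: E_def N_def card_all_edges power2_eq_square algebra_simps)
  qed
  ultimately show ?thesis
    using sum_Pow_by_size[OF finE, of excess] unfolding excess_def E_def r_def Many_def by linarith
qed

lemma model_distance:
  fixes p :: real and m n :: nat
  assumes p: "0 \<le> p" "p \<le> 1"
  shows "\<bar>prob_Gnp n (1 - exp (- (real m * p\<^sup>2 * (1 - p) ^ (n - 2)))) F - prob_RIG n m p F\<bar>
      \<le> real m * (real n ^ 3 * p ^ 3 + real n ^ 4 * p ^ 4)"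
proof -
  define q where "q = 1 - exp (- edge_prob n p)"
  define ind where "ind = (\<lambda>X. if X \<in> F then 1 else (0::real))"
  have q: "0 \<le> q" "q \<le> 1" using p by (auto simp: q_def edge_prob_def)
  have "1 - exp (- (real m * p\<^sup>2 * (1 - p) ^ (n - 2))) = 1 - (1 - q) ^ m"
    by (simp add: q_def edge_prob_def exp_of_nat_mult[symmetric] mult.assoc)
  moreover have "0 \<le> 1 - (1 - q) ^ m" "1 - (1 - q) ^ m \<le> 1" using q by (auto simp: power_le_one)
  ultimately have Gnp: "prob_Gnp n (1 - exp (- (real m * p\<^sup>2 * (1 - p) ^ (n - 2)))) F =
      measure_pmf.expectation (iid_union m (random_subset (all_edges n) q)) ind"
    by (simp add: prob_Gnp_expectation iid_union_random_subset[OF finite_all_edges q] ind_def)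
  have one_copy: "\<bar>measure_pmf.expectation (object_graph n p) h -
        measure_pmf.expectation (random_subset (all_edges n) q) h\<bar>
      \<le> real n ^ 3 * p ^ 3 + real n ^ 4 * p ^ 4"
    if h: "\<And>x. 0 \<le> h x \<and> h x \<le> 1" for h
  proof -
    have "\<bar>measure_pmf.expectation (object_graph n p) h -
          measure_pmf.expectation (random_subset (all_edges n) q) h\<bar>
        \<le> (\<Sum>x\<in>Pow (all_edges n). max 0 (pmf (object_graph n p) x -
          pmf (random_subset (all_edges n) q) x))"
      using h by (intro expectation_diff_le_excess set_object_graph set_random_subset)
        (simp_all add: finite_all_edges)
    then show ?thesis using object_graph_total_excess[OF p, of n] unfolding q_def by linarith
  qed
  have "\<bar>measure_pmf.expectation (iid_union m (object_graph n p)) ind -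
         measure_pmf.expectation (iid_union m (random_subset (all_edges n) q)) ind\<bar>
      \<le> real m * (real n ^ 3 * p ^ 3 + real n ^ 4 * p ^ 4)"
    by (rule iid_union_distance[OF one_copy]) (auto simp: ind_def)
  then show ?thesis
    unfolding Gnp prob_RIG_expectation[OF p] ind_def by linarith
qed

text \<open>Under p = o(1/(n m^(1/3))) the distance bound tends to 0: with
  x = p n m^(1/3) \<rightarrow> 0 it equals x^3 + x^3 (n p) \<le> x^3 + x^4.\<close>

lemma model_distance_tendsto_zero:
  fixes m :: "nat \<Rightarrow> nat" and p :: "nat \<Rightarrow> real"
  assumes m_pos: "\<forall>n. m n > 0"
    and p_nonneg: "\<forall>n. 0 \<le> p n"
    and p_small: "p \<in> o(\<lambda>n. 1 / (real n * root 3 (real (m n))))"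
  shows "((\<lambda>n. real (m n) * (real n ^ 3 * p n ^ 3 + real n ^ 4 * p n ^ 4)) \<longlongrightarrow> 0) sequentially"
proof -
  define x where "x n = p n * (real n * root 3 (real (m n)))" for n
  have "((\<lambda>n. p n / (1 / (real n * root 3 (real (m n))))) \<longlongrightarrow> 0) sequentially"
    by (rule smalloD_tendsto[OF p_small])
  then have "(x \<longlongrightarrow> 0) sequentially" unfolding x_def by simp
  then have x_lim: "(\<lambda>n. x n ^ 3 + x n ^ 4) \<longlonglongrightarrow> 0"
    using tendsto_add[OF tendsto_power[of x 0 _ 3] tendsto_power[of x 0 _ 4]] by simp
  have "norm (real (m n) * (real n ^ 3 * p n ^ 3 + real n ^ 4 * p n ^ 4)) \<le> x n ^ 3 + x n ^ 4" for n
  proof -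
    have pn: "0 \<le> p n" using p_nonneg by auto
    have cube: "root 3 (real (m n)) ^ 3 = real (m n)" by (simp add: real_root_pow_pos2)
    have "1 \<le> root 3 (real (m n))" using m_pos[rule_format, of n] by simp
    then have "real n * p n * 1 \<le> real n * p n * root 3 (real (m n))"
      by (rule mult_left_mono) (use pn in simp)
    then have np: "real n * p n \<le> x n" unfolding x_def by (simp add: ac_simps)
    have cubic: "real (m n) * (real n ^ 3 * p n ^ 3) = x n ^ 3"
      unfolding x_def using cube by (simp add: power_mult_distrib)
    have "real (m n) * (real n ^ 4 * p n ^ 4) = x n ^ 3 * (real n * p n)"
      unfolding x_def using cube
      by (simp add: power_mult_distrib algebra_simps eval_nat_numeral)
    also have "\<dots> \<le> x n ^ 3 * x n"
      using np pn by (intro mult_left_mono) (auto simp: x_def)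
    finally have "real (m n) * (real n ^ 4 * p n ^ 4) \<le> x n ^ 4" by (simp add: eval_nat_numeral)
    moreover have "0 \<le> real (m n) * (real n ^ 3 * p n ^ 3 + real n ^ 4 * p n ^ 4)" using pn by simp
    ultimately show ?thesis using cubic by (simp add: distrib_left)
  qed
  then show ?thesis by (intro Lim_null_comparison[OF _ x_lim]) auto
qed

theorem theorem1:
  fixes m :: "nat \<Rightarrow> nat" and p :: "nat \<Rightarrow> real" and a :: real
    and A :: "nat \<Rightarrow> nat set set set"
  assumes m_pos: "\<forall>n. m n > 0"
    and p_prob: "\<forall>n. 0 \<le> p n \<and> p n \<le> 1"
    and p_small: "p \<in> o(\<lambda>n. 1 / (real n * root 3 (real (m n))))"
    and a_range: "0 \<le> a \<and> a \<le> 1"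
    and A_prop: "graph_property A"
  shows "((\<lambda>n. prob_Gnp n (1 - exp (- (real (m n) * (p n)\<^sup>2 * (1 - p n) ^ (n - 2)))) (A n))
            \<longlongrightarrow> a) sequentially
         \<longleftrightarrow> ((\<lambda>n. prob_RIG n (m n) (p n) (A n)) \<longlongrightarrow> a) sequentially"
proof -
  define gnp where
    "gnp n = prob_Gnp n (1 - exp (- (real (m n) * (p n)\<^sup>2 * (1 - p n) ^ (n - 2)))) (A n)" for n
  define rig where "rig n = prob_RIG n (m n) (p n) (A n)" for n
  have "\<forall>\<^sub>F n in sequentially.
      norm (gnp n - rig n) \<le> real (m n) * (real n ^ 3 * p n ^ 3 + real n ^ 4 * p n ^ 4)"
    using model_distance p_prob unfolding gnp_def rig_def by auto
  then have "((\<lambda>n. gnp n - rig n) \<longlongrightarrow> 0) sequentially"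
    by (rule Lim_null_comparison[OF _ model_distance_tendsto_zero[OF m_pos _ p_small]])
      (use p_prob in auto)
  then have "(gnp \<longlongrightarrow> a) sequentially \<longleftrightarrow> (rig \<longlongrightarrow> a) sequentially"
    using Lim_transform Lim_transform2 by metis
  then show ?thesis unfolding gnp_def rig_def .
qed

end
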